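(* Let $\gamma\in\mathcal{C}$ be a convex curve. Then $$\frac{L_*(\gamma)^2}{4A_U}=A_\gamma-2A_{WC(\gamma)}-A_{CWMS(\gamma)}.$$
   Context: Standing setting. $[a,b]$ is the $2\times2$ determinant with columns $a,b$. The unit ball $U$ of a normed plane is compact convex, origin-symmetric, with nonempty interior, and boundary $u=\partial U$ a union of $2n$ arcs $u_{i+n}=-u_i$, each a smooth strictly convex arc or a segment; $u$ is parameterized as a closed curve $u:[0,2T]\to\mathbb{R}^2$ with $u(t+T)=-u(t)$, smooth with $u'\ne0$ on each interval $[t_i,t_{i+1}]$ between vertices ($[u',u'']\neq 0$ on strictly convex arcs); $A_U=\frac12\int_0^{2T}[u,u']dt$ is the area of $U$. Admissible class $\mathcal{C}$: closed continuous curves $\gamma:[0,2T]\to\mathbb{R}^2$ (extended $2T$-periodically), smooth on each $[t_i,t_{i+1}]$ with $\gamma'(t)=r(t)u'(t)$ for a scalar function $r$. Dual length $L_*(\gamma)=\int_0^{2T} r(t)[u,u'](t)\,dt$; mean width $w_\gamma=L_*(\gamma)/A_U$. $A_\gamma=\frac12\int_0^{2T}[\gamma,\gamma'](t)dt$ (the signed area, equal to the enclosed area for a positively oriented convex curve). $WC(\gamma)(t)=\frac12(\gamma(t)+\gamma(t+T))$, which is $T$-periodic, and $A_{WC(\gamma)}=\frac12\int_0^{T}[WC(\gamma),WC(\gamma)'](t)\,dt$ is its signed area over one period. $CWMS(\gamma)(t)=\frac12(\gamma(t)-\gamma(t+T)-w_\gamma u(t))$ and $A_{CWMS(\gamma)}=\frac12\int_0^{2T}[CWMS(\gamma),CWMS(\gamma)'](t)\,dt$.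 *)

theory Defs
  imports "HOL-Analysis.Analysis"
begin

definition det2 :: "real^2 \<Rightarrow> real^2 \<Rightarrow> real" where
  "det2 a b = a$1 * b$2 - a$2 * b$1"

definition vd :: "(real \<Rightarrow> real^2) \<Rightarrow> real \<Rightarrow> real \<Rightarrow> real \<Rightarrow> real^2" where
  "vd f a b t = vector_derivative f (at t within {a..b})"

definition smooth_ivl :: "(real \<Rightarrow> real^2) \<Rightarrow> real \<Rightarrow> real \<Rightarrow> bool" where
  "smooth_ivl f a b \<longleftrightarrow>
     (\<forall>k. \<forall>t\<in>{a..b}. ((\<lambda>g. vd g a b) ^^ k) f differentiable (at t within {a..b}))"

text \<open>Signed area (1/2) integral of [f,f'] over [tp 0, tp m], computed piece by piece
  (the derivative is only defined piecewise, vertices form a null set).\<close>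
definition parea :: "(nat \<Rightarrow> real) \<Rightarrow> nat \<Rightarrow> (real \<Rightarrow> real^2) \<Rightarrow> real" where
  "parea tp m f = (1/2) * (\<Sum>i<m. integral {tp i..tp (Suc i)}
        (\<lambda>t. det2 (f t) (vd f (tp i) (tp (Suc i)) t)))"

definition Lstar :: "(nat \<Rightarrow> real) \<Rightarrow> nat \<Rightarrow> (real \<Rightarrow> real^2) \<Rightarrow> (real \<Rightarrow> real) \<Rightarrow> real" where
  "Lstar tp n u r = (\<Sum>i<2*n. integral {tp i..tp (Suc i)}
        (\<lambda>t. r t * det2 (u t) (vd u (tp i) (tp (Suc i)) t)))"

definition WC :: "real \<Rightarrow> (real \<Rightarrow> real^2) \<Rightarrow> real \<Rightarrow> real^2" where
  "WC T \<gamma> t = (1/2) *\<^sub>R (\<gamma> t + \<gamma> (t + T))"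

definition CWMS :: "real \<Rightarrow> real \<Rightarrow> (real \<Rightarrow> real^2) \<Rightarrow> (real \<Rightarrow> real^2) \<Rightarrow> real \<Rightarrow> real^2" where
  "CWMS T w u \<gamma> t = (1/2) *\<^sub>R (\<gamma> t - \<gamma> (t + T) - w *\<^sub>R u t)"

definition unit_ball_setting ::
  "(real^2) set \<Rightarrow> (real \<Rightarrow> real^2) \<Rightarrow> real \<Rightarrow> nat \<Rightarrow> (nat \<Rightarrow> real) \<Rightarrow> bool" where
  "unit_ball_setting U u T n tp \<longleftrightarrow>
     compact U \<and> convex U \<and> (\<forall>x\<in>U. - x \<in> U) \<and> interior U \<noteq> {} \<and>
     T > 0 \<and> n \<ge> 1 \<and>
     tp 0 = 0 \<and> tp (2*n) = 2*T \<and> (\<forall>i<2*n. tp i < tp (Suc i)) \<and>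
     (\<forall>i\<le>n. tp (i + n) = tp i + T) \<and>
     continuous_on UNIV u \<and> (\<forall>t. u (t + T) = - u t) \<and>
     inj_on u {0..<2*T} \<and> frontier U = u ` {0..2*T} \<and>
     (\<forall>i<2*n. smooth_ivl u (tp i) (tp (Suc i)) \<and>
        (\<forall>t\<in>{tp i..tp (Suc i)}. vd u (tp i) (tp (Suc i)) t \<noteq> 0) \<and>
        ((\<forall>t\<in>{tp i..tp (Suc i)}.
            det2 (vd u (tp i) (tp (Suc i)) t)
                 (vd (vd u (tp i) (tp (Suc i))) (tp i) (tp (Suc i)) t) \<noteq> 0)
         \<or> u ` {tp i..tp (Suc i)} = closed_segment (u (tp i)) (u (tp (Suc i))))) \<and>
     parea tp (2*n) u = measure lebesgue U"

definition admissible ::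
  "(real \<Rightarrow> real^2) \<Rightarrow> real \<Rightarrow> nat \<Rightarrow> (nat \<Rightarrow> real) \<Rightarrow> (real \<Rightarrow> real^2) \<Rightarrow> (real \<Rightarrow> real) \<Rightarrow> bool" where
  "admissible u T n tp \<gamma> r \<longleftrightarrow>
     continuous_on UNIV \<gamma> \<and> (\<forall>t. \<gamma> (t + 2*T) = \<gamma> t) \<and>
     (\<forall>i<2*n. smooth_ivl \<gamma> (tp i) (tp (Suc i)) \<and>
        (\<forall>t\<in>{tp i<..<tp (Suc i)}.
           vd \<gamma> (tp i) (tp (Suc i)) t = r t *\<^sub>R vd u (tp i) (tp (Suc i)) t))"

definition convex_curve :: "(real \<Rightarrow> real^2) \<Rightarrow> real \<Rightarrow> bool" where
  "convex_curve \<gamma> T \<longleftrightarrow>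
     (\<exists>K. compact K \<and> convex K \<and> interior K \<noteq> {} \<and> \<gamma> ` {0..2*T} = frontier K)"

end

theory Submission
  imports Defs
begin

text \<open>Since \<open>WC(\<gamma>)\<close> is \<open>T\<close>-periodic, \<open>A\<^sub>\<gamma> - 2 A\<^sub>W\<^sub>C - A\<^sub>C\<^sub>W\<^sub>M\<^sub>S\<close> is half the
  integral over \<open>[0, 2T]\<close> of \<open>[\<gamma>,\<gamma>'] - [WC,WC'] - [CWMS,CWMS']\<close>. With \<open>a = \<gamma>(t)\<close> and
  \<open>b = \<gamma>(t + T)\<close> this integrand expands pointwise to
  \<open>([a,a'] - [b,b'])/2 - (w/4) d/dt [u, a - b] + (w/2) ([u,a'] - [u,b']) - (w\<^sup>2/4) [u,u']\<close>,
  where \<open>w\<close> is the width parameter of \<open>CWMS\<close>. The half turn \<open>t \<mapsto> t + T\<close> permutes the pieces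
  of the partition, so \<open>[a,a']\<close> and \<open>[b,b']\<close> have the same integral and, as \<open>u(t + T) = -u(t)\<close>,
  the integral of \<open>[u,b']\<close> is \<open>-L\<^sub>*\<close>; the integral of \<open>[u,a']\<close> is \<open>L\<^sub>*\<close> because
  \<open>\<gamma>' = r u'\<close>, and the exact term vanishes by periodicity. Hence the area defect equals
  \<open>w L\<^sub>*/2 - w\<^sup>2 A\<^sub>U/4\<close> for every \<open>w\<close>, and \<open>w = L\<^sub>*/A\<^sub>U\<close> gives \<open>L\<^sub>*\<^sup>2/(4 A\<^sub>U)\<close>.\<close>

lemma smooth_ivl_has_vector_derivative:
  assumes "smooth_ivl f a b" "t \<in> {a..b}"
  shows "(f has_vector_derivative vd f a b t) (at t within {a..b})"
proof -
  have "f differentiable (at t within {a..b})"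
    using assms unfolding smooth_ivl_def by (metis funpow_0)
  then show ?thesis unfolding vd_def by (simp add: vector_derivative_works)
qed

lemma smooth_ivl_continuous_on_vd:
  assumes "smooth_ivl f a b"
  shows "continuous_on {a..b} (vd f a b)"
proof -
  have "\<forall>t\<in>{a..b}. ((\<lambda>g. vd g a b) ^^ 1) f differentiable (at t within {a..b})"
    using assms unfolding smooth_ivl_def by blast
  then show ?thesis
    by (simp add: continuous_on_eq_continuous_within differentiable_imp_continuous_within)
qed

lemma smooth_ivl_continuous_on: "smooth_ivl f a b \<Longrightarrow> continuous_on {a..b} f"
  by (rule continuous_on_vector_derivative) (rule smooth_ivl_has_vector_derivative)

lemma has_vector_derivative_shift_within:
  assumes "(f has_vector_derivative f') (at (t + c) within {a + c..b + c})"
  shows "((\<lambda>s. f (s + c)) has_vector_derivative f') (at t within {a..b})"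
proof -
  have "((\<lambda>s. s + c) has_vector_derivative 1) (at t within {a..b})"
    by (auto intro!: derivative_eq_intros)
  moreover have "(\<lambda>s. s + c) ` {a..b} = {a + c..b + c}" by simp
  ultimately show ?thesis
    using vector_diff_chain_within[of "\<lambda>s. s + c" 1 t "{a..b}" f f'] assms by (simp add: o_def)
qed

lemma sum_lessThan_add:
  "(\<Sum>i<n + (m::nat). f i) = (\<Sum>i<n. f i) + (\<Sum>i<m. f (i + n) :: 'a::comm_monoid_add)"
  by (induction m) (simp_all add: ac_simps)

lemma det2_scaleR_right: "det2 a (c *\<^sub>R b) = c * det2 a b"
  by (simp add: det2_def algebra_simps)

lemma det2_minus_left: "det2 (- a) b = - det2 a b"
  by (simp add: det2_def)

lemma has_vector_derivative_det2:
  assumes "(f has_vector_derivative f') (at t within S)" "(g has_vector_derivative g') (at t within S)"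
  shows "((\<lambda>t. det2 (f t) (g t)) has_vector_derivative det2 f' (g t) + det2 (f t) g') (at t within S)"
proof -
  have nth: "\<And>h h' i. (h has_vector_derivative h') (at t within S) \<Longrightarrow>
      ((\<lambda>t. h t $ i) has_vector_derivative h' $ i) (at t within S)"
    by (rule bounded_linear.has_vector_derivative[OF bounded_linear_vec_nth])
  have "((\<lambda>t. f t $ 1 * g t $ 2 - f t $ 2 * g t $ 1) has_vector_derivative
     f t $ 1 * g' $ 2 + f' $ 1 * g t $ 2 - (f t $ 2 * g' $ 1 + f' $ 2 * g t $ 1)) (at t within S)"
    by (intro has_vector_derivative_diff has_vector_derivative_mult nth assms)
  then show ?thesis
    unfolding det2_def by (rule has_vector_derivative_eq_rhs) (simp add: algebra_simps)
qed

lemma continuous_on_det2 [continuous_intros]: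
  "continuous_on S f \<Longrightarrow> continuous_on S g \<Longrightarrow> continuous_on S (\<lambda>t. det2 (f t) (g t))"
  unfolding det2_def by (intro continuous_intros)

lemma det2_area_decomposition:
  fixes a b u A B V :: "real^2"
  shows "(1/2) * det2 a A - (1/2) * det2 ((1/2) *\<^sub>R (a + b)) ((1/2) *\<^sub>R (A + B))
     - (1/2) * det2 ((1/2) *\<^sub>R (a - b - w *\<^sub>R u)) ((1/2) *\<^sub>R (A - B - w *\<^sub>R V))
   = (1/4) * det2 a A - (1/4) * det2 b B - (w/8) * (det2 V (a - b) + det2 u (A - B))
     + (w/4) * (det2 u A - det2 u B) - (w^2/8) * det2 u V"
  unfolding det2_def by (simp add: power2_eq_square algebra_simps)

locale antipodal_partition =
  fixes tp :: "nat \<Rightarrow> real" and n :: nat and T :: real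
  assumes tp_0: "tp 0 = 0" and tp_2n: "tp (2*n) = 2*T"
    and tp_less: "\<And>i. i < 2*n \<Longrightarrow> tp i < tp (Suc i)"
    and tp_add_n: "\<And>i. i \<le> n \<Longrightarrow> tp (i + n) = tp i + T"
begin

definition opp :: "nat \<Rightarrow> nat" where
  "opp i = (if i < n then i + n else i - n)"

definition shift :: "nat \<Rightarrow> real" where
  "shift i = (if i < n then T else - T)"

lemma opp_piece:
  assumes "i < 2*n"
  shows "opp i < 2*n" "opp (opp i) = i"
    "tp (opp i) = tp i + shift i" "tp (Suc (opp i)) = tp (Suc i) + shift i"
proof -
  show "opp i < 2*n" "opp (opp i) = i"
    using assms by (auto simp: opp_def)
  show "tp (opp i) = tp i + shift i" "tp (Suc (opp i)) = tp (Suc i) + shift i"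
    using tp_add_n[of i] tp_add_n[of "Suc i"] tp_add_n[of "i - n"] tp_add_n[of "Suc (i - n)"] assms
    by (auto simp: opp_def shift_def Suc_diff_le)
qed

lemma periodic_shift:
  assumes "\<And>t. f (t + 2*T) = f t"
  shows "f (t + shift i) = f (t + T)"
proof -
  have "f (t + T) = f (t - T)"
    using assms[of "t - T"] by (simp add: algebra_simps)
  then show ?thesis by (simp add: shift_def)
qed

lemma antiperiodic_shift:
  fixes f :: "real \<Rightarrow> 'a::group_add"
  assumes "\<And>t. f (t + T) = - f t"
  shows "f (t + shift i) = - f t"
  using assms[of t] assms[of "t - T"] by (auto simp: shift_def)

definition piece_integral :: "(nat \<Rightarrow> real \<Rightarrow> real) \<Rightarrow> real" where
  "piece_integral F = (\<Sum>i<2*n. integral {tp i..tp (Suc i)} (F i))"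

definition piecewise_continuous :: "(nat \<Rightarrow> real \<Rightarrow> 'a::topological_space) \<Rightarrow> bool" where
  "piecewise_continuous F \<longleftrightarrow> (\<forall>i<2*n. continuous_on {tp i..tp (Suc i)} (F i))"

lemma piece_integral_cong:
  assumes "\<And>i t. i < 2*n \<Longrightarrow> t \<in> {tp i..tp (Suc i)} \<Longrightarrow> F i t = G i t"
  shows "piece_integral F = piece_integral G"
  unfolding piece_integral_def using assms by (intro sum.cong refl integral_cong) auto

lemma piece_integral_add:
  "piecewise_continuous F \<Longrightarrow> piecewise_continuous G \<Longrightarrow>
    piece_integral (\<lambda>i t. F i t + G i t) = piece_integral F + piece_integral G"
  unfolding piece_integral_def piecewise_continuous_def
  by (simp add: sum.distrib[symmetric] integral_add integrable_continuous_interval)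

lemma piece_integral_diff:
  "piecewise_continuous F \<Longrightarrow> piecewise_continuous G \<Longrightarrow>
    piece_integral (\<lambda>i t. F i t - G i t) = piece_integral F - piece_integral G"
  unfolding piece_integral_def piecewise_continuous_def
  by (simp add: sum_subtractf[symmetric] integral_diff integrable_continuous_interval)

lemma piece_integral_cmult: "piece_integral (\<lambda>i t. c * F i t) = c * piece_integral F"
  by (simp add: piece_integral_def sum_distrib_left)

lemma piecewise_continuous_add:
  fixes F G :: "nat \<Rightarrow> real \<Rightarrow> 'a::real_normed_vector"
  shows "piecewise_continuous F \<Longrightarrow> piecewise_continuous G \<Longrightarrow>
    piecewise_continuous (\<lambda>i t. F i t + G i t)"
  by (simp add: piecewise_continuous_def continuous_on_add)

lemma piecewise_continuous_diff:
  fixes F G :: "nat \<Rightarrow> real \<Rightarrow> 'a::real_normed_vector"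
  shows "piecewise_continuous F \<Longrightarrow> piecewise_continuous G \<Longrightarrow>
    piecewise_continuous (\<lambda>i t. F i t - G i t)"
  by (simp add: piecewise_continuous_def continuous_on_diff)

lemma piecewise_continuous_cmult:
  "piecewise_continuous F \<Longrightarrow> piecewise_continuous (\<lambda>i t. c * F i t :: real)"
  by (simp add: piecewise_continuous_def continuous_on_mult_left)

lemma piecewise_continuous_scaleR:
  fixes F :: "nat \<Rightarrow> real \<Rightarrow> 'a::real_normed_vector"
  assumes "piecewise_continuous F"
  shows "piecewise_continuous (\<lambda>i t. c *\<^sub>R F i t)"
  using assms by (simp add: piecewise_continuous_def continuous_on_scaleR)

lemma piecewise_continuous_det2:
  "piecewise_continuous F \<Longrightarrow> piecewise_continuous G \<Longrightarrow>
    piecewise_continuous (\<lambda>i t. det2 (F i t) (G i t))"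
  by (simp add: piecewise_continuous_def continuous_on_det2)

lemma piece_integral_opp_shift:
  "piece_integral (\<lambda>i t. F (opp i) (t + shift i)) = piece_integral F"
proof -
  have "integral {tp i..tp (Suc i)} (\<lambda>t. F (opp i) (t + shift i))
      = integral {tp (opp i)..tp (Suc (opp i))} (F (opp i))" if "i < 2*n" for i
    using integral_shift_Icc_real[of "tp i" "tp (Suc i)" "F (opp i)" "shift i"] opp_piece[OF that]
    by (simp add: o_def add.commute)
  then have "piece_integral (\<lambda>i t. F (opp i) (t + shift i))
      = (\<Sum>i<2*n. integral {tp (opp i)..tp (Suc (opp i))} (F (opp i)))"
    by (simp add: piece_integral_def)
  also have "\<dots> = piece_integral F"
    unfolding piece_integral_def
    by (rule sum.reindex_bij_witness[of _ opp opp]) (use opp_piece in auto)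
  finally show ?thesis .
qed

lemma piece_integral_exact:
  assumes "\<And>i t. i < 2*n \<Longrightarrow> t \<in> {tp i..tp (Suc i)} \<Longrightarrow>
      (\<phi> has_vector_derivative F i t) (at t within {tp i..tp (Suc i)})"
  shows "piece_integral F = \<phi> (2*T) - \<phi> 0"
proof -
  have "integral {tp i..tp (Suc i)} (F i) = \<phi> (tp (Suc i)) - \<phi> (tp i)" if "i < 2*n" for i
    using tp_less[OF that] assms[OF that]
    by (intro integral_unique fundamental_theorem_of_calculus) auto
  then have "piece_integral F = (\<Sum>i<2*n. \<phi> (tp (Suc i)) - \<phi> (tp i))"
    by (simp add: piece_integral_def)
  also have "\<dots> = \<phi> (2*T) - \<phi> 0"
    using sum_lessThan_telescope[of "\<lambda>i. \<phi> (tp i)"] by (simp add: tp_0 tp_2n)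
  finally show ?thesis .
qed

lemma piece_integral_half:
  assumes "\<And>i t. i < n \<Longrightarrow> F (i + n) (t + T) = F i t"
  shows "(\<Sum>i<n. integral {tp i..tp (Suc i)} (F i)) = piece_integral F / 2"
proof -
  have "integral {tp (i + n)..tp (Suc (i + n))} (F (i + n)) = integral {tp i..tp (Suc i)} (F i)"
    if "i < n" for i
    using integral_shift_Icc_real[of "tp i" "tp (Suc i)" "F (i + n)" T] assms[OF that]
      tp_add_n[of i] tp_add_n[of "Suc i"] that
    by (simp add: o_def add.commute)
  then show ?thesis
    unfolding piece_integral_def mult_2 sum_lessThan_add by simp
qed

lemma vd_piece_eqI:
  assumes "i < 2*n" "t \<in> {tp i..tp (Suc i)}"
    and "(f has_vector_derivative f') (at t within {tp i..tp (Suc i)})"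
  shows "vd f (tp i) (tp (Suc i)) t = f'"
  unfolding vd_def using vector_derivative_within_closed_interval tp_less assms by blast

lemma parea_eq_piece_integral:
  "parea tp (2*n) f = piece_integral (\<lambda>i t. det2 (f t) (vd f (tp i) (tp (Suc i)) t)) / 2"
  by (simp add: parea_def piece_integral_def)

end

locale antipodal_curves = antipodal_partition +
  fixes u \<gamma> :: "real \<Rightarrow> real^2" and r :: "real \<Rightarrow> real"
  assumes u_antiperiodic: "\<And>t. u (t + T) = - u t"
    and \<gamma>_periodic: "\<And>t. \<gamma> (t + 2*T) = \<gamma> t"
    and u_smooth: "\<And>i. i < 2*n \<Longrightarrow> smooth_ivl u (tp i) (tp (Suc i))"
    and \<gamma>_smooth: "\<And>i. i < 2*n \<Longrightarrow> smooth_ivl \<gamma> (tp i) (tp (Suc i))"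
    and \<gamma>_vd: "\<And>i t. i < 2*n \<Longrightarrow> t \<in> {tp i<..<tp (Suc i)} \<Longrightarrow>
      vd \<gamma> (tp i) (tp (Suc i)) t = r t *\<^sub>R vd u (tp i) (tp (Suc i)) t"
begin

abbreviation u' :: "nat \<Rightarrow> real \<Rightarrow> real^2" where
  "u' i \<equiv> vd u (tp i) (tp (Suc i))"

abbreviation \<gamma>' :: "nat \<Rightarrow> real \<Rightarrow> real^2" where
  "\<gamma>' i \<equiv> vd \<gamma> (tp i) (tp (Suc i))"

text \<open>The velocity of \<open>\<lambda>t. \<gamma> (t + T)\<close> on piece \<open>i\<close>.\<close>
abbreviation \<gamma>'_T :: "nat \<Rightarrow> real \<Rightarrow> real^2" where
  "\<gamma>'_T i t \<equiv> \<gamma>' (opp i) (t + shift i)"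

lemma has_vector_derivative_u:
  "i < 2*n \<Longrightarrow> t \<in> {tp i..tp (Suc i)} \<Longrightarrow>
    (u has_vector_derivative u' i t) (at t within {tp i..tp (Suc i)})"
  by (rule smooth_ivl_has_vector_derivative[OF u_smooth])

lemma has_vector_derivative_\<gamma>:
  "i < 2*n \<Longrightarrow> t \<in> {tp i..tp (Suc i)} \<Longrightarrow>
    (\<gamma> has_vector_derivative \<gamma>' i t) (at t within {tp i..tp (Suc i)})"
  by (rule smooth_ivl_has_vector_derivative[OF \<gamma>_smooth])

lemma has_vector_derivative_\<gamma>_half_turn:
  assumes "i < 2*n" "t \<in> {tp i..tp (Suc i)}"
  shows "((\<lambda>s. \<gamma> (s + T)) has_vector_derivative \<gamma>'_T i t) (at t within {tp i..tp (Suc i)})"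
proof -
  note opp = opp_piece[OF assms(1)]
  have "(\<gamma> has_vector_derivative \<gamma>'_T i t)
      (at (t + shift i) within {tp i + shift i..tp (Suc i) + shift i})"
    using has_vector_derivative_\<gamma>[OF opp(1), of "t + shift i"] assms(2) opp(3,4) by auto
  then have "((\<lambda>s. \<gamma> (s + shift i)) has_vector_derivative \<gamma>'_T i t) (at t within {tp i..tp (Suc i)})"
    by (rule has_vector_derivative_shift_within)
  then show ?thesis
    using periodic_shift[of \<gamma>, OF \<gamma>_periodic] by simp
qed

lemma continuous_on_pieces:
  assumes "i < 2*n"
  shows "continuous_on {tp i..tp (Suc i)} u" "continuous_on {tp i..tp (Suc i)} \<gamma>"
    "continuous_on {tp i..tp (Suc i)} (\<lambda>t. \<gamma> (t + T))"
    "continuous_on {tp i..tp (Suc i)} (u' i)" "continuous_on {tp i..tp (Suc i)} (\<gamma>' i)"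
    "continuous_on {tp i..tp (Suc i)} (\<gamma>'_T i)"
proof -
  note opp = opp_piece[OF assms]
  show "continuous_on {tp i..tp (Suc i)} u" "continuous_on {tp i..tp (Suc i)} \<gamma>"
    using assms u_smooth \<gamma>_smooth smooth_ivl_continuous_on by blast+
  show "continuous_on {tp i..tp (Suc i)} (\<lambda>t. \<gamma> (t + T))"
    by (rule continuous_on_vector_derivative) (rule has_vector_derivative_\<gamma>_half_turn[OF assms])
  show "continuous_on {tp i..tp (Suc i)} (u' i)" "continuous_on {tp i..tp (Suc i)} (\<gamma>' i)"
    using assms u_smooth \<gamma>_smooth smooth_ivl_continuous_on_vd by blast+
  have "continuous_on {tp (opp i)..tp (Suc (opp i))} (\<gamma>' (opp i))"
    using opp(1) \<gamma>_smooth smooth_ivl_continuous_on_vd by blast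
  then show "continuous_on {tp i..tp (Suc i)} (\<gamma>'_T i)"
    by (rule continuous_on_compose2[of _ _ _ "\<lambda>t. t + shift i"])
      (auto intro!: continuous_intros simp: opp(3,4))
qed

lemma vd_WC:
  assumes "i < 2*n" "t \<in> {tp i..tp (Suc i)}"
  shows "vd (WC T \<gamma>) (tp i) (tp (Suc i)) t = (1/2) *\<^sub>R (\<gamma>' i t + \<gamma>'_T i t)"
  unfolding WC_def
  by (intro vd_piece_eqI bounded_linear.has_vector_derivative[OF bounded_linear_scaleR_right]
      has_vector_derivative_add has_vector_derivative_\<gamma> has_vector_derivative_\<gamma>_half_turn assms)

lemma vd_CWMS:
  assumes "i < 2*n" "t \<in> {tp i..tp (Suc i)}"
  shows "vd (CWMS T w u \<gamma>) (tp i) (tp (Suc i)) t = (1/2) *\<^sub>R (\<gamma>' i t - \<gamma>'_T i t - w *\<^sub>R u' i t)"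
  unfolding CWMS_def
  by (intro vd_piece_eqI bounded_linear.has_vector_derivative[OF bounded_linear_scaleR_right]
      has_vector_derivative_diff has_vector_derivative_\<gamma> has_vector_derivative_\<gamma>_half_turn
      has_vector_derivative_u assms)

lemma piecewise_continuous_curves:
  "piecewise_continuous (\<lambda>i. u)" "piecewise_continuous (\<lambda>i. \<gamma>)"
  "piecewise_continuous (\<lambda>i t. \<gamma> (t + T))" "piecewise_continuous u'"
  "piecewise_continuous \<gamma>'" "piecewise_continuous \<gamma>'_T"
  unfolding piecewise_continuous_def using continuous_on_pieces by auto

lemma twice_parea_WC:
  "2 * parea tp n (WC T \<gamma>)
    = piece_integral (\<lambda>i t. det2 (WC T \<gamma> t) ((1/2) *\<^sub>R (\<gamma>' i t + \<gamma>'_T i t))) / 2"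
proof -
  have "parea tp n (WC T \<gamma>)
      = (1/2) * (\<Sum>i<n. integral {tp i..tp (Suc i)}
          (\<lambda>t. det2 (WC T \<gamma> t) ((1/2) *\<^sub>R (\<gamma>' i t + \<gamma>'_T i t))))"
    unfolding parea_def
    by (intro arg_cong[where f="\<lambda>x. (1/2) * x"] sum.cong integral_cong) (auto simp: vd_WC)
  also have "\<dots> = (1/2) * (piece_integral
      (\<lambda>i t. det2 (WC T \<gamma> t) ((1/2) *\<^sub>R (\<gamma>' i t + \<gamma>'_T i t))) / 2)"
  proof (subst piece_integral_half)
    fix i t assume "i < n"
    then have "opp i = i + n" "shift i = T" "opp (i + n) = i" "shift (i + n) = - T"
      by (simp_all add: opp_def shift_def)
    moreover have "WC T \<gamma> (t + T) = WC T \<gamma> t"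
      using \<gamma>_periodic[of t] by (simp add: WC_def add.assoc add.commute)
    ultimately show "det2 (WC T \<gamma> (t + T)) ((1/2) *\<^sub>R (\<gamma>' (i + n) (t + T) + \<gamma>'_T (i + n) (t + T)))
        = det2 (WC T \<gamma> t) ((1/2) *\<^sub>R (\<gamma>' i t + \<gamma>'_T i t))"
      by (simp add: add.commute)
  qed simp
  finally show ?thesis by simp
qed

lemma parea_CWMS:
  "parea tp (2*n) (CWMS T w u \<gamma>)
    = piece_integral (\<lambda>i t. det2 (CWMS T w u \<gamma> t) ((1/2) *\<^sub>R (\<gamma>' i t - \<gamma>'_T i t - w *\<^sub>R u' i t))) / 2"
  unfolding parea_eq_piece_integral
  by (intro arg_cong[where f="\<lambda>x. x / 2"] piece_integral_cong) (simp add: vd_CWMS)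

lemma piece_integral_\<gamma>_half_turn:
  "piece_integral (\<lambda>i t. det2 (\<gamma> (t + T)) (\<gamma>'_T i t)) = piece_integral (\<lambda>i t. det2 (\<gamma> t) (\<gamma>' i t))"
  using piece_integral_opp_shift[of "\<lambda>i t. det2 (\<gamma> t) (\<gamma>' i t)"]
    periodic_shift[of \<gamma>, OF \<gamma>_periodic] by simp

lemma piece_integral_eq_Lstar:
  "piece_integral (\<lambda>i t. det2 (u t) (\<gamma>' i t)) = Lstar tp n u r"
  unfolding Lstar_def piece_integral_def
proof (rule sum.cong[OF refl])
  fix i assume "i \<in> {..<2*n}"
  then show "integral {tp i..tp (Suc i)} (\<lambda>t. det2 (u t) (\<gamma>' i t))
      = integral {tp i..tp (Suc i)} (\<lambda>t. r t * det2 (u t) (u' i t))"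
    by (intro integral_spike[of "{tp i, tp (Suc i)}"]) (auto simp: \<gamma>_vd det2_scaleR_right)
qed

lemma piece_integral_eq_minus_Lstar:
  "piece_integral (\<lambda>i t. det2 (u t) (\<gamma>'_T i t)) = - Lstar tp n u r"
proof -
  have "piece_integral (\<lambda>i t. det2 (u t) (\<gamma>'_T i t)) = piece_integral (\<lambda>i t. - 1 * det2 (u t) (\<gamma>' i t))"
    using piece_integral_opp_shift[of "\<lambda>i t. - 1 * det2 (u t) (\<gamma>' i t)"]
      antiperiodic_shift[of u, OF u_antiperiodic] by (simp add: det2_minus_left)
  also have "\<dots> = - Lstar tp n u r"
    by (simp only: piece_integral_cmult piece_integral_eq_Lstar)
  finally show ?thesis .
qed

lemma piece_integral_exact_term:
  "piece_integral (\<lambda>i t. det2 (u' i t) (\<gamma> t - \<gamma> (t + T)) + det2 (u t) (\<gamma>' i t - \<gamma>'_T i t)) = 0"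
proof -
  define \<phi> where "\<phi> t = det2 (u t) (\<gamma> t - \<gamma> (t + T))" for t
  have "(\<phi> has_vector_derivative
      det2 (u' i t) (\<gamma> t - \<gamma> (t + T)) + det2 (u t) (\<gamma>' i t - \<gamma>'_T i t))
      (at t within {tp i..tp (Suc i)})" if "i < 2*n" "t \<in> {tp i..tp (Suc i)}" for i t
    unfolding \<phi>_def
    by (intro has_vector_derivative_det2 has_vector_derivative_diff has_vector_derivative_u
        has_vector_derivative_\<gamma> has_vector_derivative_\<gamma>_half_turn that)
  then have "piece_integral (\<lambda>i t. det2 (u' i t) (\<gamma> t - \<gamma> (t + T)) + det2 (u t) (\<gamma>' i t - \<gamma>'_T i t))
      = \<phi> (2*T) - \<phi> 0"
    by (rule piece_integral_exact[of \<phi>])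
  moreover have "u (2*T) = u 0"
    using u_antiperiodic[of T] u_antiperiodic[of 0] by (metis add_0 minus_minus mult_2)
  moreover have "\<gamma> (2*T + T) = \<gamma> T" "\<gamma> (2*T) = \<gamma> 0"
    using \<gamma>_periodic[of T] \<gamma>_periodic[of 0] by (simp_all add: add.commute)
  ultimately show ?thesis by (simp add: \<phi>_def)
qed

lemma area_defect_quadratic:
  "parea tp (2*n) \<gamma> - 2 * parea tp n (WC T \<gamma>) - parea tp (2*n) (CWMS T w u \<gamma>)
    = w * Lstar tp n u r / 2 - w^2 * parea tp (2*n) u / 4"
proof -
  define X where "X i t = det2 (\<gamma> t) (\<gamma>' i t)" for i t
  define Y where "Y i t = det2 (\<gamma> (t + T)) (\<gamma>'_T i t)" for i t
  define D where "D i t = det2 (u' i t) (\<gamma> t - \<gamma> (t + T)) + det2 (u t) (\<gamma>' i t - \<gamma>'_T i t)" for i t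
  define P where "P i t = det2 (u t) (\<gamma>' i t)" for i t
  define Q where "Q i t = det2 (u t) (\<gamma>'_T i t)" for i t
  define R where "R i t = det2 (u t) (u' i t)" for i t
  define W where "W i t = det2 (WC T \<gamma> t) ((1/2) *\<^sub>R (\<gamma>' i t + \<gamma>'_T i t))" for i t
  define C where "C i t = det2 (CWMS T w u \<gamma> t) ((1/2) *\<^sub>R (\<gamma>' i t - \<gamma>'_T i t - w *\<^sub>R u' i t))" for i t
  have pc: "piecewise_continuous X" "piecewise_continuous Y" "piecewise_continuous D"
    "piecewise_continuous P" "piecewise_continuous Q" "piecewise_continuous R"
    "piecewise_continuous W" "piecewise_continuous C"
    unfolding X_def Y_def D_def P_def Q_def R_def W_def C_def WC_def CWMS_def
    by (intro piecewise_continuous_det2 piecewise_continuous_add piecewise_continuous_diff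
        piecewise_continuous_scaleR piecewise_continuous_curves)+
  note linear = piece_integral_add piece_integral_diff piece_integral_cmult
    piecewise_continuous_add piecewise_continuous_diff piecewise_continuous_cmult pc
  have "parea tp (2*n) \<gamma> = piece_integral X / 2"
    unfolding X_def[abs_def] by (rule parea_eq_piece_integral)
  moreover have "2 * parea tp n (WC T \<gamma>) = piece_integral W / 2"
    unfolding W_def[abs_def] by (rule twice_parea_WC)
  moreover have "parea tp (2*n) (CWMS T w u \<gamma>) = piece_integral C / 2"
    unfolding C_def[abs_def] by (rule parea_CWMS)
  ultimately have "parea tp (2*n) \<gamma> - 2 * parea tp n (WC T \<gamma>) - parea tp (2*n) (CWMS T w u \<gamma>)
      = (1/2) * piece_integral X - (1/2) * piece_integral W - (1/2) * piece_integral C"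
    by simp
  also have "\<dots> = piece_integral (\<lambda>i t. (1/2) * X i t - (1/2) * W i t - (1/2) * C i t)"
    by (simp only: linear)
  also have "\<dots> = piece_integral (\<lambda>i t. (1/4) * X i t - (1/4) * Y i t - (w/8) * D i t
      + (w/4) * (P i t - Q i t) - (w^2/8) * R i t)"
    unfolding X_def Y_def D_def P_def Q_def R_def W_def C_def WC_def CWMS_def
    by (intro piece_integral_cong det2_area_decomposition)
  also have "\<dots> = (1/4) * piece_integral X - (1/4) * piece_integral Y - (w/8) * piece_integral D
      + (w/4) * (piece_integral P - piece_integral Q) - (w^2/8) * piece_integral R"
    by (simp only: linear)
  also have "\<dots> = w * Lstar tp n u r / 2 - w^2 * parea tp (2*n) u / 4"
    using piece_integral_\<gamma>_half_turn piece_integral_exact_term piece_integral_eq_Lstar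
      piece_integral_eq_minus_Lstar parea_eq_piece_integral[of u]
    by (simp add: X_def[abs_def] Y_def[abs_def] D_def[abs_def] P_def[abs_def] Q_def[abs_def]
        R_def[abs_def])
  finally show ?thesis .
qed

end

theorem mainTheorem10:
  fixes U :: "(real^2) set" and u \<gamma> :: "real \<Rightarrow> real^2" and r :: "real \<Rightarrow> real"
    and T :: real and n :: nat and tp :: "nat \<Rightarrow> real"
  assumes "unit_ball_setting U u T n tp"
    and "admissible u T n tp \<gamma> r"
    and "convex_curve \<gamma> T"
  shows "(Lstar tp n u r)^2 / (4 * parea tp (2*n) u)
       = parea tp (2*n) \<gamma>
         - 2 * parea tp n (WC T \<gamma>)
         - parea tp (2*n) (CWMS T (Lstar tp n u r / parea tp (2*n) u) u \<gamma>)"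
proof -
  interpret antipodal_curves tp n T u \<gamma> r
    using assms(1,2) by unfold_locales (auto simp: unit_ball_setting_def admissible_def)
  define L where "L = Lstar tp n u r"
  define A where "A = parea tp (2*n) u"
  have "L^2 / (4 * A) = (L / A) * L / 2 - (L / A)^2 * A / 4"
    by (cases "A = 0") (simp_all add: field_simps power2_eq_square)
  then show ?thesis
    using area_defect_quadratic[of "L / A"] by (simp add: L_def A_def)
qed

end
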